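(* Let $M$ be a loopless matroid of rank $r$ on ground set $S$, and let $S=S_1\cup\dots\cup S_r$ be a partition of $S$ into $r$ color classes. The following are equivalent: (i) $S_i$ is a cut of the restriction $M|(S_1\cup\dots\cup S_i)$ for $i=1,\dots,r$; (ii) the coloring is rainbow circuit-free and $r_M(S_1\cup\dots\cup S_i)=i$ for $i=1,\dots,r$; (iii) each $S_i$ is non-empty and $S_1\cup\dots\cup S_i$ is closed in $M$ for $i=1,\dots,r$.
   Context: A cut of a matroid is an inclusionwise minimal subset of the ground set intersecting every basis. A coloring is rainbow circuit-free if no circuit of $M$ has all its elements of pairwise different colors. A set $X\subseteq S$ is closed (a flat) if $r_M(X+e)>r_M(X)$ for every $e\in S-X$. *)

theory Defs
  imports Main
begin

definition matroid :: "'a set \<Rightarrow> ('a set \<Rightarrow> bool) \<Rightarrow> bool" where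
  "matroid S indep \<longleftrightarrow>
     finite S \<and>
     (\<forall>I. indep I \<longrightarrow> I \<subseteq> S) \<and>
     indep {} \<and>
     (\<forall>I J. indep J \<and> I \<subseteq> J \<longrightarrow> indep I) \<and>
     (\<forall>I J. indep I \<and> indep J \<and> card I < card J \<longrightarrow> (\<exists>x\<in>J - I. indep (insert x I)))"

definition rk :: "('a set \<Rightarrow> bool) \<Rightarrow> 'a set \<Rightarrow> nat" where
  "rk indep X = Max {card I | I. I \<subseteq> X \<and> indep I}"

definition loopless :: "'a set \<Rightarrow> ('a set \<Rightarrow> bool) \<Rightarrow> bool" where
  "loopless S indep \<longleftrightarrow> (\<forall>x\<in>S. indep {x})"

definition circuit :: "'a set \<Rightarrow> ('a set \<Rightarrow> bool) \<Rightarrow> 'a set \<Rightarrow> bool" where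
  "circuit S indep C \<longleftrightarrow> C \<subseteq> S \<and> \<not> indep C \<and> (\<forall>x\<in>C. indep (C - {x}))"

text \<open>Bases of the restriction M|T (independent sets of M|T are the independent sets of M inside T).\<close>
definition basis_restr :: "('a set \<Rightarrow> bool) \<Rightarrow> 'a set \<Rightarrow> 'a set \<Rightarrow> bool" where
  "basis_restr indep T B \<longleftrightarrow> B \<subseteq> T \<and> indep B \<and> (\<forall>x\<in>T - B. \<not> indep (insert x B))"

definition is_cut_restr :: "('a set \<Rightarrow> bool) \<Rightarrow> 'a set \<Rightarrow> 'a set \<Rightarrow> bool" where
  "is_cut_restr indep T X \<longleftrightarrow>
     X \<subseteq> T \<and> (\<forall>B. basis_restr indep T B \<longrightarrow> X \<inter> B \<noteq> {}) \<and>
     (\<forall>Y. Y \<subset> X \<longrightarrow> (\<exists>B. basis_restr indep T B \<and> Y \<inter> B = {}))"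

definition closed_set :: "'a set \<Rightarrow> ('a set \<Rightarrow> bool) \<Rightarrow> 'a set \<Rightarrow> bool" where
  "closed_set S indep X \<longleftrightarrow> X \<subseteq> S \<and> (\<forall>e\<in>S - X. rk indep (insert e X) > rk indep X)"

definition rainbow_circuit_free ::
  "'a set \<Rightarrow> ('a set \<Rightarrow> bool) \<Rightarrow> nat \<Rightarrow> (nat \<Rightarrow> 'a set) \<Rightarrow> bool" where
  "rainbow_circuit_free S indep r Sc \<longleftrightarrow>
     \<not> (\<exists>C. circuit S indep C \<and> (\<forall>i\<in>{1..r}. card (C \<inter> Sc i) \<le> 1))"

end

theory Submission
  imports Defs
begin

text \<open>Write T k for S 1 \<union> ... \<union> S k. All three conditions are equivalent to: rk (T k) = k
  for every k, and no element e of S (k+1) lies in the closure of T k, i.e.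
  rk (T k) < rk (insert e (T k)). The rank condition is what lets a rainbow basis of each T k be
  built greedily, one element of each colour.\<close>

locale indep_matroid =
  fixes S :: "'a set" and indep :: "'a set \<Rightarrow> bool"
  assumes matroid: "matroid S indep"
begin

lemma finite_ground: "finite S"
  using matroid unfolding matroid_def by blast

lemma indep_subset_ground: "indep I \<Longrightarrow> I \<subseteq> S"
  using matroid unfolding matroid_def by blast

lemma indep_finite: "indep I \<Longrightarrow> finite I"
  using indep_subset_ground finite_ground finite_subset by blast

lemma indep_empty: "indep {}"
  using matroid unfolding matroid_def by blast

lemma indep_subset: "indep J \<Longrightarrow> I \<subseteq> J \<Longrightarrow> indep I"
  using matroid unfolding matroid_def by blast

lemma indep_augment:
  "indep I \<Longrightarrow> indep J \<Longrightarrow> card I < card J \<Longrightarrow> \<exists>x\<in>J - I. indep (insert x I)"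
  using matroid unfolding matroid_def by blast

lemma card_insert_indep: "indep I \<Longrightarrow> x \<notin> I \<Longrightarrow> card (insert x I) = Suc (card I)"
  by (simp add: indep_finite)

lemma finite_indep_cards: "finite {card I | I. I \<subseteq> X \<and> indep I}"
proof -
  have "{card I | I. I \<subseteq> X \<and> indep I} \<subseteq> {..card S}"
    using indep_subset_ground finite_ground card_mono by fastforce
  then show ?thesis
    using finite_subset by blast
qed

lemma card_le_rk: "I \<subseteq> X \<Longrightarrow> indep I \<Longrightarrow> card I \<le> rk indep X"
  unfolding rk_def using finite_indep_cards by (intro Max_ge) auto

lemma rk_attainedE:
  obtains I where "I \<subseteq> X" "indep I" "card I = rk indep X"
proof -
  have "{card I | I. I \<subseteq> X \<and> indep I} \<noteq> {}"
    using indep_empty by blast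
  from Max_in[OF finite_indep_cards this]
  have "\<exists>I. I \<subseteq> X \<and> indep I \<and> card I = rk indep X"
    unfolding rk_def by auto
  then show thesis
    using that by blast
qed

lemma rk_mono:
  assumes "X \<subseteq> Y"
  shows "rk indep X \<le> rk indep Y"
proof -
  obtain I where I: "I \<subseteq> X" "indep I" "card I = rk indep X"
    using rk_attainedE .
  have "card I \<le> rk indep Y"
    using card_le_rk I(1,2) assms by blast
  then show ?thesis
    using I(3) by simp
qed

lemma rk_empty [simp]: "rk indep {} = 0"
proof -
  obtain I where "I \<subseteq> {}" "indep I" "card I = rk indep {}"
    using rk_attainedE .
  then show ?thesis
    by simp
qed

lemma indep_extend_to_rk:
  assumes "indep I" "I \<subseteq> X"
  obtains J where "I \<subseteq> J" "J \<subseteq> X" "indep J" "card J = rk indep X"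
proof -
  let ?P = "\<lambda>J. I \<subseteq> J \<and> J \<subseteq> X \<and> indep J"
  have "?P I"
    using assms by blast
  moreover have "\<forall>J. ?P J \<longrightarrow> card J < Suc (card S)"
  proof (intro allI impI)
    fix J
    assume "?P J"
    then have "J \<subseteq> S"
      using indep_subset_ground by blast
    then show "card J < Suc (card S)"
      using card_mono[OF finite_ground] by (simp add: less_Suc_eq_le)
  qed
  ultimately have "\<exists>J. ?P J \<and> (\<forall>J'. ?P J' \<longrightarrow> card J' \<le> card J)"
    by (rule Lattices_Big.ex_has_greatest_nat)
  then obtain J where J: "I \<subseteq> J" "J \<subseteq> X" "indep J"
    and greatest: "\<And>J'. ?P J' \<Longrightarrow> card J' \<le> card J"
    by blast
  have "\<not> card J < rk indep X"
  proof
    assume "card J < rk indep X"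
    obtain K where K: "K \<subseteq> X" "indep K" "card K = rk indep X"
      using rk_attainedE .
    then obtain x where x: "x \<in> K - J" "indep (insert x J)"
      using indep_augment[OF J(3) K(2)] \<open>card J < rk indep X\<close> by auto
    then have "card (insert x J) \<le> card J"
      using greatest[of "insert x J"] J K(1) by blast
    moreover have "card (insert x J) = Suc (card J)"
      using card_insert_indep[OF J(3)] x(1) by blast
    ultimately show False
      by simp
  qed
  then have "card J = rk indep X"
    using J card_le_rk[of J X] by simp
  with J show thesis
    by (intro that) auto
qed

lemma basis_restr_iff_card:
  "basis_restr indep T B \<longleftrightarrow> B \<subseteq> T \<and> indep B \<and> card B = rk indep T"
proof
  assume basis: "basis_restr indep T B"
  then have B: "B \<subseteq> T" "indep B"
    unfolding basis_restr_def by auto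
  obtain J where J: "B \<subseteq> J" "J \<subseteq> T" "indep J" "card J = rk indep T"
    using indep_extend_to_rk[OF B(2) B(1)] .
  have "\<not> card B < card J"
  proof
    assume "card B < card J"
    then obtain x where "x \<in> J - B" "indep (insert x B)"
      using indep_augment[OF B(2) J(3)] by blast
    then show False
      using J(2) basis unfolding basis_restr_def by blast
  qed
  then show "B \<subseteq> T \<and> indep B \<and> card B = rk indep T"
    using B J(4) card_le_rk[OF B] by simp
next
  assume B: "B \<subseteq> T \<and> indep B \<and> card B = rk indep T"
  have "\<not> indep (insert x B)" if "x \<in> T - B" for x
    using card_le_rk[of "insert x B" T] card_insert_indep[of B x] B that by auto
  then show "basis_restr indep T B"
    unfolding basis_restr_def using B by blast
qed

lemma rk_insert_gt_iff:
  assumes I: "I \<subseteq> X" "indep I" "card I = rk indep X" and "e \<notin> X"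
  shows "rk indep X < rk indep (insert e X) \<longleftrightarrow> indep (insert e I)"
proof
  assume "rk indep X < rk indep (insert e X)"
  obtain J where J: "J \<subseteq> insert e X" "indep J" "card J = rk indep (insert e X)"
    using rk_attainedE .
  have "card I < card J"
    using I(3) J(3) \<open>rk indep X < rk indep (insert e X)\<close> by simp
  then obtain x where x: "x \<in> J - I" "indep (insert x I)"
    using indep_augment[OF I(2) J(2)] by blast
  have "x \<notin> X"
  proof
    assume "x \<in> X"
    then have "card (insert x I) \<le> rk indep X"
      using card_le_rk[OF _ x(2)] I(1) by blast
    moreover have "card (insert x I) = Suc (card I)"
      using card_insert_indep[OF I(2)] x(1) by blast
    ultimately show False
      using I(3) by simp
  qed
  then show "indep (insert e I)"
    using x J(1) by auto
next
  assume "indep (insert e I)"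
  then have "card (insert e I) \<le> rk indep (insert e X)"
    using card_le_rk[of "insert e I" "insert e X"] I(1) by blast
  moreover have "card (insert e I) = Suc (card I)"
    using card_insert_indep[OF I(2)] I(1) \<open>e \<notin> X\<close> by blast
  ultimately show "rk indep X < rk indep (insert e X)"
    using I(3) by simp
qed

lemma rk_insert_gt_antimono:
  assumes "X \<subseteq> Y" "e \<notin> Y" "rk indep Y < rk indep (insert e Y)"
  shows "rk indep X < rk indep (insert e X)"
proof -
  obtain I where I: "I \<subseteq> X" "indep I" "card I = rk indep X"
    using rk_attainedE .
  have "I \<subseteq> Y"
    using I(1) assms(1) by blast
  obtain J where J: "I \<subseteq> J" "J \<subseteq> Y" "indep J" "card J = rk indep Y"
    using indep_extend_to_rk[OF I(2) \<open>I \<subseteq> Y\<close>] .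
  have "indep (insert e J)"
    using rk_insert_gt_iff J(2-4) assms(2,3) by blast
  then have "indep (insert e I)"
    using indep_subset J(1) by blast
  then show ?thesis
    using rk_insert_gt_iff I assms(1,2) by blast
qed

lemma exists_circuit_subset:
  assumes "D \<subseteq> S" "\<not> indep D"
  shows "\<exists>C\<subseteq>D. circuit S indep C"
proof -
  have "finite D"
    using assms(1) finite_ground finite_subset by blast
  then show ?thesis
    using assms
  proof (induction D rule: finite_psubset_induct)
    case (psubset D)
    show ?case
    proof (cases "\<forall>x\<in>D. indep (D - {x})")
      case True
      then show ?thesis
        using psubset.prems unfolding circuit_def by blast
    next
      case False
      then obtain x where "x \<in> D" "\<not> indep (D - {x})"
        by blast
      then show ?thesis
        using psubset.IH[of "D - {x}"] psubset.prems by blast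
    qed
  qed
qed

end

lemma nat_fun_eq_id_if_strict_steps:
  fixes f :: "nat \<Rightarrow> nat"
  assumes "f 0 = 0" "f n = n" "\<And>i. i < n \<Longrightarrow> f i < f (Suc i)" "i \<le> n"
  shows "f i = i"
proof -
  have growth: "f i + (j - i) \<le> f j" if "i \<le> j" "j \<le> n" for i j
    using that(1)
  proof (induction j rule: dec_induct)
    case base
    show ?case
      by simp
  next
    case (step k)
    have "f k < f (Suc k)"
      using assms(3) step.hyps(2) that(2) by simp
    then show ?case
      using step.IH step.hyps(1) by (simp add: Suc_diff_le)
  qed
  show ?thesis
    using growth[of 0 i] growth[of i n] assms by simp
qed

lemma ball_atLeast1_atMost_iff_Suc: "(\<forall>i\<in>{1..n}. P i) \<longleftrightarrow> (\<forall>i<n. P (Suc i))"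
  unfolding image_Suc_lessThan[symmetric] by blast

locale colored_matroid = indep_matroid +
  fixes Sc :: "nat \<Rightarrow> 'a set" and r :: nat
  assumes loopless: "loopless S indep"
    and r_eq_rk: "r = rk indep S"
    and classes_cover: "(\<Union>i\<in>{1..r}. Sc i) = S"
    and classes_disjoint: "\<forall>i\<in>{1..r}. \<forall>j\<in>{1..r}. i \<noteq> j \<longrightarrow> Sc i \<inter> Sc j = {}"
begin

definition classes_upto :: "nat \<Rightarrow> 'a set" where
  "classes_upto i = (\<Union>j\<in>{1..i}. Sc j)"

lemma classes_upto_0 [simp]: "classes_upto 0 = {}"
  by (simp add: classes_upto_def)

lemma classes_upto_Suc: "classes_upto (Suc i) = classes_upto i \<union> Sc (Suc i)"
  by (auto simp: classes_upto_def atLeastAtMostSuc_conv)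

lemma classes_upto_mono: "i \<le> j \<Longrightarrow> classes_upto i \<subseteq> classes_upto j"
  unfolding classes_upto_def by (intro UN_mono) auto

lemma classes_upto_r: "classes_upto r = S"
  using classes_cover by (simp add: classes_upto_def)

lemma classes_upto_subset_ground: "i \<le> r \<Longrightarrow> classes_upto i \<subseteq> S"
  using classes_upto_mono[of i r] classes_upto_r by simp

lemma class_subset_ground: "k < r \<Longrightarrow> Sc (Suc k) \<subseteq> S"
  using classes_cover by auto

lemma class_subset_classes_upto: "k < i \<Longrightarrow> Sc (Suc k) \<subseteq> classes_upto i"
  unfolding classes_upto_def by force

lemma class_disjoint_classes_upto:
  assumes "k < r"
  shows "Sc (Suc k) \<inter> classes_upto k = {}"
proof -
  have "Sc (Suc k) \<inter> Sc j = {}" if "j \<in> {1..k}" for j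
    using classes_disjoint[rule_format, of "Suc k" j] assms that by simp
  then show ?thesis
    unfolding classes_upto_def by blast
qed

lemma ground_element_class:
  assumes "e \<in> S"
  obtains k where "k < r" "e \<in> Sc (Suc k)"
proof -
  obtain j where "j \<in> {1..r}" "e \<in> Sc j"
    using assms classes_cover by blast
  then show thesis
    using that[of "j - 1"] by (cases j) auto
qed

definition rainbow :: "'a set \<Rightarrow> bool" where
  "rainbow X \<longleftrightarrow> (\<forall>i\<in>{1..r}. card (X \<inter> Sc i) \<le> 1)"

lemma rainbow_circuit_free_iff:
  "rainbow_circuit_free S indep r Sc \<longleftrightarrow> \<not> (\<exists>C. circuit S indep C \<and> rainbow C)"
  unfolding rainbow_circuit_free_def rainbow_def ..

lemma rainbow_empty: "rainbow {}"
  by (simp add: rainbow_def)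

lemma rainbow_subset:
  assumes "rainbow X" "finite X" "Y \<subseteq> X"
  shows "rainbow Y"
  unfolding rainbow_def
proof
  fix i
  assume "i \<in> {1..r}"
  have "card (Y \<inter> Sc i) \<le> card (X \<inter> Sc i)"
    using assms(2,3) by (intro card_mono) auto
  then show "card (Y \<inter> Sc i) \<le> 1"
    using assms(1) \<open>i \<in> {1..r}\<close> unfolding rainbow_def by fastforce
qed

lemma rainbow_insert:
  assumes "rainbow X" "X \<subseteq> classes_upto k" "k < r" "e \<in> Sc (Suc k)"
  shows "rainbow (insert e X)"
  unfolding rainbow_def
proof
  fix j
  assume j: "j \<in> {1..r}"
  show "card (insert e X \<inter> Sc j) \<le> 1"
  proof (cases "j = Suc k")
    case True
    then have "insert e X \<inter> Sc j \<subseteq> {e}"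
      using assms(2) class_disjoint_classes_upto[OF assms(3)] by blast
    then have "card (insert e X \<inter> Sc j) \<le> card {e}"
      by (intro card_mono) simp_all
    then show ?thesis
      by simp
  next
    case False
    then have "e \<notin> Sc j"
      using classes_disjoint[rule_format, of "Suc k" j] j assms(3,4) by auto
    then have "insert e X \<inter> Sc j = X \<inter> Sc j"
      by blast
    then show ?thesis
      using assms(1) j unfolding rainbow_def by simp
  qed
qed

lemma rainbow_class_unique:
  assumes "rainbow X" "finite X" "k < r" "x \<in> X \<inter> Sc (Suc k)" "y \<in> X \<inter> Sc (Suc k)"
  shows "x = y"
proof -
  have "card (X \<inter> Sc (Suc k)) \<le> Suc 0"
    using assms(1,3) unfolding rainbow_def by simp
  then show ?thesis
    using card_le_Suc0_iff_eq[of "X \<inter> Sc (Suc k)"] assms(2,4,5) by blast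
qed

lemma rainbow_last_class:
  assumes "rainbow X" "X \<subseteq> S" "X \<noteq> {}"
  obtains k e where "k < r" "e \<in> X \<inter> Sc (Suc k)" "X - {e} \<subseteq> classes_upto k"
proof -
  have "finite X"
    using assms(2) finite_ground finite_subset by blast
  define K where "K = {k. k < r \<and> X \<inter> Sc (Suc k) \<noteq> {}}"
  obtain x where "x \<in> X"
    using assms(3) by blast
  then have "x \<in> S"
    using assms(2) by blast
  then obtain j where "j < r" "x \<in> Sc (Suc j)"
    by (rule ground_element_class)
  then have "K \<noteq> {}"
    unfolding K_def using \<open>x \<in> X\<close> by blast
  moreover have "finite K"
    unfolding K_def by simp
  ultimately have "Max K \<in> K" and K_le_Max: "\<And>j. j \<in> K \<Longrightarrow> j \<le> Max K"
    by simp_all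
  then obtain e where "Max K < r" "e \<in> X \<inter> Sc (Suc (Max K))"
    unfolding K_def by blast
  moreover have "X - {e} \<subseteq> classes_upto (Max K)"
  proof
    fix y
    assume y: "y \<in> X - {e}"
    then have "y \<in> S"
      using assms(2) by blast
    then obtain j where j: "j < r" "y \<in> Sc (Suc j)"
      by (rule ground_element_class)
    then have "j \<le> Max K"
      using y K_le_Max unfolding K_def by blast
    moreover have "j \<noteq> Max K"
      using rainbow_class_unique[OF assms(1) \<open>finite X\<close> j(1)] j y \<open>e \<in> X \<inter> Sc (Suc (Max K))\<close>
      by blast
    ultimately have "j < Max K"
      by simp
    then show "y \<in> classes_upto (Max K)"
      using class_subset_classes_upto j(2) by blast
  qed
  ultimately show thesis
    by (rule that)
qed

definition avoids_closures :: bool where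
  "avoids_closures \<longleftrightarrow>
     (\<forall>k<r. \<forall>e\<in>Sc (Suc k). rk indep (classes_upto k) < rk indep (insert e (classes_upto k)))"

definition unit_rank_steps :: bool where
  "unit_rank_steps \<longleftrightarrow> (\<forall>k<r. rk indep (classes_upto (Suc k)) = Suc k)"

lemma rk_classes_upto: "unit_rank_steps \<Longrightarrow> i \<le> r \<Longrightarrow> rk indep (classes_upto i) = i"
  unfolding unit_rank_steps_def by (cases i) auto

lemma unit_rank_steps_if_rk_increasing:
  assumes "\<And>k. k < r \<Longrightarrow> rk indep (classes_upto k) < rk indep (classes_upto (Suc k))"
  shows unit_rank_steps
  unfolding unit_rank_steps_def
proof (intro allI impI)
  fix k
  assume "k < r"
  have "rk indep (classes_upto r) = r"
    by (simp add: classes_upto_r r_eq_rk[symmetric])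
  then show "rk indep (classes_upto (Suc k)) = Suc k"
    using nat_fun_eq_id_if_strict_steps[of "\<lambda>i. rk indep (classes_upto i)" r "Suc k"] assms \<open>k < r\<close>
    by simp
qed

lemma class_nonempty_if_unit_rank_steps:
  assumes unit_rank_steps "k < r"
  shows "Sc (Suc k) \<noteq> {}"
proof
  assume "Sc (Suc k) = {}"
  then have "classes_upto (Suc k) = classes_upto k"
    by (simp add: classes_upto_Suc)
  then show False
    using rk_classes_upto[OF assms(1), of k] rk_classes_upto[OF assms(1), of "Suc k"] assms(2) by simp
qed

lemma rk_increasing_if_avoids_closures:
  assumes avoids_closures "k < r" "Sc (Suc k) \<noteq> {}"
  shows "rk indep (classes_upto k) < rk indep (classes_upto (Suc k))"
proof -
  obtain e where e: "e \<in> Sc (Suc k)"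
    using assms(3) by blast
  then have "rk indep (classes_upto k) < rk indep (insert e (classes_upto k))"
    using assms(1,2) unfolding avoids_closures_def by blast
  also have "\<dots> \<le> rk indep (classes_upto (Suc k))"
    using e by (intro rk_mono) (auto simp: classes_upto_Suc)
  finally show ?thesis .
qed

lemma rk_increasing_if_cut:
  assumes "k < r" "is_cut_restr indep (classes_upto (Suc k)) (Sc (Suc k))"
  shows "rk indep (classes_upto k) < rk indep (classes_upto (Suc k))"
proof -
  obtain I where I: "I \<subseteq> classes_upto k" "indep I" "card I = rk indep (classes_upto k)"
    using rk_attainedE .
  have "Sc (Suc k) \<inter> I = {}"
    using I(1) class_disjoint_classes_upto[OF assms(1)] by blast
  then have "\<not> basis_restr indep (classes_upto (Suc k)) I"
    using assms(2) unfolding is_cut_restr_def by blast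
  moreover have I_sub: "I \<subseteq> classes_upto (Suc k)"
    using I(1) classes_upto_mono[of k "Suc k"] by simp
  ultimately have "card I \<noteq> rk indep (classes_upto (Suc k))"
    using I(2) basis_restr_iff_card by blast
  moreover have "card I \<le> rk indep (classes_upto (Suc k))"
    using card_le_rk[OF I_sub I(2)] .
  ultimately show ?thesis
    using I(3) by simp
qed

text \<open>By minimality of the cut, some basis of the first Suc k classes meets class Suc k
  only in e.\<close>
lemma rk_insert_increasing_if_cut:
  assumes "k < r" "is_cut_restr indep (classes_upto (Suc k)) (Sc (Suc k))" "e \<in> Sc (Suc k)"
  shows "rk indep (classes_upto k) < rk indep (insert e (classes_upto k))"
proof -
  have "Sc (Suc k) - {e} \<subset> Sc (Suc k)"
    using assms(3) by blast
  then obtain B where B: "basis_restr indep (classes_upto (Suc k)) B" "(Sc (Suc k) - {e}) \<inter> B = {}"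
    using assms(2) unfolding is_cut_restr_def by blast
  then have B_basis: "B \<subseteq> classes_upto (Suc k)" "indep B" "card B = rk indep (classes_upto (Suc k))"
    unfolding basis_restr_iff_card by blast+
  then have "B \<subseteq> insert e (classes_upto k)"
    using B(2) unfolding classes_upto_Suc by blast
  then have "rk indep (classes_upto (Suc k)) \<le> rk indep (insert e (classes_upto k))"
    using card_le_rk[OF _ B_basis(2)] B_basis(3) by simp
  then show ?thesis
    using rk_increasing_if_cut[OF assms(1,2)] by simp
qed

lemma cut_if_avoids_closures:
  assumes avoids_closures unit_rank_steps "k < r"
  shows "is_cut_restr indep (classes_upto (Suc k)) (Sc (Suc k))"
proof -
  have rk_k: "rk indep (classes_upto k) = k"
    and rk_Suc: "rk indep (classes_upto (Suc k)) = Suc k"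
    using rk_classes_upto[OF assms(2)] assms(3) by simp_all
  have class_sub: "Sc (Suc k) \<subseteq> classes_upto (Suc k)"
    by (simp add: classes_upto_Suc)
  have hits: "Sc (Suc k) \<inter> B \<noteq> {}" if "basis_restr indep (classes_upto (Suc k)) B" for B
  proof
    assume "Sc (Suc k) \<inter> B = {}"
    moreover have B: "B \<subseteq> classes_upto (Suc k)" "indep B" "card B = Suc k"
      using that rk_Suc unfolding basis_restr_iff_card by simp_all
    ultimately have "B \<subseteq> classes_upto k"
      unfolding classes_upto_Suc by blast
    then have "card B \<le> k"
      using card_le_rk[OF _ B(2)] rk_k by metis
    then show False
      using B(3) by simp
  qed
  have misses: "\<exists>B. basis_restr indep (classes_upto (Suc k)) B \<and> Y \<inter> B = {}"
    if Y: "Y \<subset> Sc (Suc k)" for Y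
  proof -
    obtain y where y: "y \<in> Sc (Suc k)" "y \<notin> Y"
      using Y by blast
    obtain I where I: "I \<subseteq> classes_upto k" "indep I" "card I = rk indep (classes_upto k)"
      using rk_attainedE .
    have y_new: "y \<notin> classes_upto k"
      using y(1) class_disjoint_classes_upto[OF assms(3)] by blast
    then have "indep (insert y I)"
      using rk_insert_gt_iff[OF I y_new] assms(1,3) y(1) unfolding avoids_closures_def by blast
    moreover have "card (insert y I) = rk indep (classes_upto (Suc k))"
      using card_insert_indep[OF I(2)] I(1,3) y_new rk_k rk_Suc by auto
    moreover have "insert y I \<subseteq> classes_upto (Suc k)"
      using I(1) y(1) unfolding classes_upto_Suc by blast
    ultimately have "basis_restr indep (classes_upto (Suc k)) (insert y I)"
      unfolding basis_restr_iff_card by blast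
    moreover have "Y \<inter> insert y I = {}"
      using y I(1) Y class_disjoint_classes_upto[OF assms(3)] by blast
    ultimately show ?thesis
      by blast
  qed
  show ?thesis
    unfolding is_cut_restr_def using class_sub hits misses by blast
qed

text \<open>The element of a rainbow circuit in its last class would lie in the closure of the
  earlier classes, as the rest of the circuit does.\<close>
lemma rainbow_circuit_free_if_avoids_closures:
  assumes avoids_closures
  shows "rainbow_circuit_free S indep r Sc"
  unfolding rainbow_circuit_free_iff
proof
  assume "\<exists>C. circuit S indep C \<and> rainbow C"
  then obtain C where C: "circuit S indep C" "rainbow C"
    by blast
  have C_ground: "C \<subseteq> S" and dep: "\<not> indep C" and minimal: "\<And>x. x \<in> C \<Longrightarrow> indep (C - {x})"
    using C(1) unfolding circuit_def by auto
  have "C \<noteq> {}"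
    using dep indep_empty by blast
  obtain k e where k: "k < r" and e: "e \<in> C \<inter> Sc (Suc k)"
    and rest: "C - {e} \<subseteq> classes_upto k"
    using rainbow_last_class[OF C(2) C_ground \<open>C \<noteq> {}\<close>] .
  have "indep (C - {e})"
    using minimal e by blast
  obtain I where I: "C - {e} \<subseteq> I" "I \<subseteq> classes_upto k" "indep I"
    "card I = rk indep (classes_upto k)"
    using indep_extend_to_rk[OF \<open>indep (C - {e})\<close> rest] .
  have e_new: "e \<notin> classes_upto k"
    using e class_disjoint_classes_upto[OF k] by blast
  then have "indep (insert e I)"
    using rk_insert_gt_iff[OF I(2-4) e_new] assms k e unfolding avoids_closures_def by blast
  moreover have "C \<subseteq> insert e I"
    using I(1) by blast
  ultimately show False
    using dep indep_subset by blast
qed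

lemma exists_rainbow_basis:
  assumes unit_rank_steps "i \<le> r"
  shows "\<exists>I\<subseteq>classes_upto i. indep I \<and> card I = i \<and> rainbow I"
  using assms(2)
proof (induction i)
  case 0
  show ?case
    using indep_empty rainbow_empty by auto
next
  case (Suc i)
  then obtain I where I: "I \<subseteq> classes_upto i" "indep I" "card I = i" "rainbow I"
    by auto
  have rk_i: "rk indep (classes_upto i) = i"
    using rk_classes_upto[OF assms(1)] Suc.prems by simp
  obtain J where J: "J \<subseteq> classes_upto (Suc i)" "indep J" "card J = rk indep (classes_upto (Suc i))"
    using rk_attainedE .
  have "card J = Suc i"
    using J(3) rk_classes_upto[OF assms(1) Suc.prems] by simp
  then obtain x where x: "x \<in> J - I" "indep (insert x I)"
    using indep_augment[OF I(2) J(2)] I(3) by auto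
  have card_insert: "card (insert x I) = Suc i"
    using card_insert_indep[OF I(2)] x(1) I(3) by simp
  have "x \<notin> classes_upto i"
  proof
    assume "x \<in> classes_upto i"
    then have "insert x I \<subseteq> classes_upto i"
      using I(1) by blast
    then have "card (insert x I) \<le> i"
      using card_le_rk[OF _ x(2)] rk_i by metis
    then show False
      using card_insert by simp
  qed
  then have "x \<in> Sc (Suc i)"
    using x(1) J(1) unfolding classes_upto_Suc by blast
  then have "rainbow (insert x I)"
    using rainbow_insert[OF I(4) I(1)] Suc.prems by simp
  moreover have "insert x I \<subseteq> classes_upto (Suc i)"
    using I(1) \<open>x \<in> Sc (Suc i)\<close> unfolding classes_upto_Suc by blast
  ultimately show ?case
    using x(2) card_insert by blast
qed

text \<open>An element of class Suc k in the closure of the earlier classes forms a circuit with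
  part of a rainbow basis of those classes.\<close>
lemma avoids_closures_if_rainbow_circuit_free:
  assumes "rainbow_circuit_free S indep r Sc" unit_rank_steps
  shows avoids_closures
  unfolding avoids_closures_def
proof (intro allI impI ballI)
  fix k e
  assume k: "k < r" and e: "e \<in> Sc (Suc k)"
  obtain I where I: "I \<subseteq> classes_upto k" "indep I" "card I = k" "rainbow I"
    using exists_rainbow_basis[OF assms(2), of k] k by auto
  have I_max: "card I = rk indep (classes_upto k)"
    using rk_classes_upto[OF assms(2), of k] k I(3) by simp
  have e_new: "e \<notin> classes_upto k"
    using e class_disjoint_classes_upto[OF k] by blast
  show "rk indep (classes_upto k) < rk indep (insert e (classes_upto k))"
  proof (rule ccontr)
    assume "\<not> ?thesis"
    then have "\<not> indep (insert e I)"
      using rk_insert_gt_iff[OF I(1,2) I_max e_new] by blast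
    moreover have "insert e I \<subseteq> S"
      using I(1) classes_upto_subset_ground[of k] class_subset_ground[OF k] e k by auto
    ultimately obtain C where C: "C \<subseteq> insert e I" "circuit S indep C"
      using exists_circuit_subset by blast
    have "rainbow C"
      using rainbow_subset[OF rainbow_insert[OF I(4) I(1) k e] _ C(1)] indep_finite[OF I(2)] by simp
    then show False
      using assms(1) C(2) unfolding rainbow_circuit_free_iff by blast
  qed
qed

text \<open>Closures are monotone, so an element outside the closure of the classes before its own
  is outside the closure of any shorter prefix.\<close>
lemma closed_if_avoids_closures:
  assumes avoids_closures "i \<le> r"
  shows "closed_set S indep (classes_upto i)"
  unfolding closed_set_def
proof (intro conjI ballI)
  show "classes_upto i \<subseteq> S"
    using classes_upto_subset_ground[OF assms(2)] .
next
  fix e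
  assume e: "e \<in> S - classes_upto i"
  then have "e \<in> S"
    by blast
  then obtain k where k: "k < r" "e \<in> Sc (Suc k)"
    by (rule ground_element_class)
  have "i \<le> k"
  proof (rule ccontr)
    assume "\<not> i \<le> k"
    then have "k < i"
      by simp
    then have "e \<in> classes_upto i"
      using class_subset_classes_upto k(2) by blast
    then show False
      using e by blast
  qed
  have "e \<notin> classes_upto k"
    using k class_disjoint_classes_upto by blast
  moreover have "rk indep (classes_upto k) < rk indep (insert e (classes_upto k))"
    using assms(1) k unfolding avoids_closures_def by blast
  ultimately show "rk indep (classes_upto i) < rk indep (insert e (classes_upto i))"
    using rk_insert_gt_antimono[OF classes_upto_mono[OF \<open>i \<le> k\<close>]] by blast
qed

lemma avoids_closures_if_closed:
  assumes "\<And>k. k < r \<Longrightarrow> closed_set S indep (classes_upto (Suc k))"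
  shows avoids_closures
  unfolding avoids_closures_def
proof (intro allI impI ballI)
  fix k e
  assume k: "k < r" and e: "e \<in> Sc (Suc k)"
  show "rk indep (classes_upto k) < rk indep (insert e (classes_upto k))"
  proof (cases k)
    case 0
    have "indep {e}"
      using loopless class_subset_ground[OF k] e unfolding loopless_def by blast
    then have "1 \<le> rk indep {e}"
      using card_le_rk[of "{e}" "{e}"] by simp
    then show ?thesis
      using 0 by simp
  next
    case (Suc j)
    have "e \<in> S - classes_upto k"
      using class_subset_ground[OF k] e class_disjoint_classes_upto[OF k] by blast
    then show ?thesis
      using assms[of j] Suc k unfolding closed_set_def by simp
  qed
qed

lemma cuts_iff_avoids_closures:
  "(\<forall>k<r. is_cut_restr indep (classes_upto (Suc k)) (Sc (Suc k)))
     \<longleftrightarrow> avoids_closures \<and> unit_rank_steps"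
proof
  assume cuts: "\<forall>k<r. is_cut_restr indep (classes_upto (Suc k)) (Sc (Suc k))"
  have avoids_closures
    unfolding avoids_closures_def using cuts rk_insert_increasing_if_cut by blast
  moreover have unit_rank_steps
    using cuts rk_increasing_if_cut by (intro unit_rank_steps_if_rk_increasing) blast
  ultimately show "avoids_closures \<and> unit_rank_steps" ..
next
  assume "avoids_closures \<and> unit_rank_steps"
  then show "\<forall>k<r. is_cut_restr indep (classes_upto (Suc k)) (Sc (Suc k))"
    using cut_if_avoids_closures by blast
qed

lemma rainbow_circuit_free_iff_avoids_closures:
  "rainbow_circuit_free S indep r Sc \<and> unit_rank_steps \<longleftrightarrow> avoids_closures \<and> unit_rank_steps"
  using rainbow_circuit_free_if_avoids_closures avoids_closures_if_rainbow_circuit_free by blast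

lemma closed_iff_avoids_closures:
  "(\<forall>k<r. Sc (Suc k) \<noteq> {} \<and> closed_set S indep (classes_upto (Suc k)))
     \<longleftrightarrow> avoids_closures \<and> unit_rank_steps"
proof
  assume closed: "\<forall>k<r. Sc (Suc k) \<noteq> {} \<and> closed_set S indep (classes_upto (Suc k))"
  then have avoids_closures
    by (intro avoids_closures_if_closed) blast
  moreover have unit_rank_steps
    using closed rk_increasing_if_avoids_closures[OF \<open>avoids_closures\<close>]
    by (intro unit_rank_steps_if_rk_increasing) blast
  ultimately show "avoids_closures \<and> unit_rank_steps" ..
next
  assume "avoids_closures \<and> unit_rank_steps"
  then show "\<forall>k<r. Sc (Suc k) \<noteq> {} \<and> closed_set S indep (classes_upto (Suc k))"
    using class_nonempty_if_unit_rank_steps closed_if_avoids_closures by (simp add: Suc_leI)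
qed

end

theorem lemma13:
  fixes S :: "'a set" and indep :: "'a set \<Rightarrow> bool" and Sc :: "nat \<Rightarrow> 'a set" and r :: nat
  assumes "matroid S indep"
    and "loopless S indep"
    and "r = rk indep S"
    and "(\<Union>i\<in>{1..r}. Sc i) = S"
    and "\<forall>i\<in>{1..r}. \<forall>j\<in>{1..r}. i \<noteq> j \<longrightarrow> Sc i \<inter> Sc j = {}"
  shows "((\<forall>i\<in>{1..r}. is_cut_restr indep (\<Union>j\<in>{1..i}. Sc j) (Sc i))
          \<longleftrightarrow> (rainbow_circuit_free S indep r Sc \<and>
               (\<forall>i\<in>{1..r}. rk indep (\<Union>j\<in>{1..i}. Sc j) = i)))
       \<and> ((rainbow_circuit_free S indep r Sc \<and>
               (\<forall>i\<in>{1..r}. rk indep (\<Union>j\<in>{1..i}. Sc j) = i))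
          \<longleftrightarrow> (\<forall>i\<in>{1..r}. Sc i \<noteq> {} \<and> closed_set S indep (\<Union>j\<in>{1..i}. Sc j)))"
proof -
  interpret colored_matroid S indep Sc r
    using assms by (simp add: colored_matroid_def colored_matroid_axioms_def indep_matroid_def)
  have classes_upto_eq: "(\<Union>j\<in>{1..i}. Sc j) = classes_upto i" for i
    by (simp add: classes_upto_def)
  show ?thesis
    unfolding classes_upto_eq ball_atLeast1_atMost_iff_Suc
    using cuts_iff_avoids_closures rainbow_circuit_free_iff_avoids_closures closed_iff_avoids_closures
    unfolding unit_rank_steps_def by blast
qed

end
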